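(* Let $q=2^m$ with $m\ge 4$ even. Then the incidence structure $(U_{q+1},\mathcal B_{q-4}(\mathrm{Tr}_{q^2/q}(\mathcal C_{\{3,5\}})))$ is a $3$-$(q+1,q-4,\lambda)$ design with $\lambda=\frac{(q-4)(q-5)(q-6)}{60}$, and its complementary incidence structure (whose blocks are the complements in $U_{q+1}$ of the blocks) is a $3$-$(q+1,5,1)$ design.
   Context: $U_{q+1}$ is the set of $(q+1)$-th roots of unity in $\mathrm{GF}(q^2)$; coordinates are indexed by $U_{q+1}$. $\mathcal C_{\{3,5\}}=\{(a_3u^3+a_{q-2}u^{q-2}+a_5u^5+a_{q-4}u^{q-4})_{u\in U_{q+1}}: a_i\in\mathrm{GF}(q^2)\}$; $\mathrm{Tr}_{q^2/q}(\mathcal C)$ is obtained by applying $x\mapsto x+x^q$ coordinatewise. $\mathcal B_w(\mathcal C)$ is the set of supports of codewords of Hamming weight $w$. A $t$-$(v,k,\lambda)$ design is a set of $v$ points with a set of $k$-subsets (blocks) such that every $t$ points lie in exactly $\lambda>0$ blocks. *)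

theory Defs
  imports Main
begin

text \<open>GF(q^2) is modelled by a finite field type 'a with CARD('a) = q^2.\<close>

definition roots_unity :: "nat \<Rightarrow> 'a::field set" where
  "roots_unity q = {u. u ^ (q + 1) = 1}"

definition trace_q2q :: "nat \<Rightarrow> 'a::field \<Rightarrow> 'a" where
  "trace_q2q q x = x + x ^ q"

text \<open>Codewords of C_{3,5} as functions on the field (only values on U_{q+1} matter);
  u^(q-2), u^(q-4) are genuine nonnegative powers since q >= 16.\<close>
definition code_C35 :: "nat \<Rightarrow> ('a::field \<Rightarrow> 'a) set" where
  "code_C35 q = {(\<lambda>u. a3 * u ^ 3 + b * u ^ (q - 2) + a5 * u ^ 5 + c * u ^ (q - 4))
                  | a3 b a5 c. True}"

definition trace_code :: "nat \<Rightarrow> ('a::field \<Rightarrow> 'a) set \<Rightarrow> ('a \<Rightarrow> 'a) set" where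
  "trace_code q C = {(\<lambda>u. trace_q2q q (f u)) | f. f \<in> C}"

definition supp_on :: "'a set \<Rightarrow> ('a \<Rightarrow> 'b::zero) \<Rightarrow> 'a set" where
  "supp_on P f = {u \<in> P. f u \<noteq> 0}"

definition blocks_of_weight :: "'a set \<Rightarrow> ('a \<Rightarrow> 'b::zero) set \<Rightarrow> nat \<Rightarrow> 'a set set" where
  "blocks_of_weight P C w = {supp_on P f | f. f \<in> C \<and> card (supp_on P f) = w}"

definition is_t_design :: "nat \<Rightarrow> nat \<Rightarrow> nat \<Rightarrow> nat \<Rightarrow> 'a set \<Rightarrow> 'a set set \<Rightarrow> bool" where
  "is_t_design t v k lam P Bs \<longleftrightarrow>
     finite P \<and> card P = v \<and> (\<forall>B\<in>Bs. B \<subseteq> P \<and> card B = k) \<and> lam > 0 \<and>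
     (\<forall>T. T \<subseteq> P \<and> card T = t \<longrightarrow> card {B \<in> Bs. T \<subseteq> B} = lam)"

definition complement_blocks :: "'a set \<Rightarrow> 'a set set \<Rightarrow> 'a set set" where
  "complement_blocks P Bs = (\<lambda>B. P - B) ` Bs"

end

theory Submission
  imports Defs "HOL-Library.Cardinality" "HOL-Computational_Algebra.Polynomial"
    "HOL-Computational_Algebra.Primes"
begin

text \<open>
  On \<open>U = U\<^sub>q\<^sub>+\<^sub>1\<close> we have \<open>u\<^sup>q = 1/u\<close>, so \<open>u\<^sup>5\<close> times the trace of the codeword with
  coefficients \<open>a\<^sub>3, b, a\<^sub>5, c\<close> is \<open>X u\<^sup>8 + X\<^sup>q u\<^sup>2 + Y u\<^sup>1\<^sup>0 + Y\<^sup>q\<close> with \<open>X = a\<^sub>3 + b\<^sup>q\<close> and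
  \<open>Y = a\<^sub>5 + c\<^sup>q\<close>. In characteristic 2 this is the square of
  \<open>H(u) = y u\<^sup>5 + x u\<^sup>4 + x\<^sup>q u + y\<^sup>q\<close> where \<open>x\<^sup>2 = X\<close>, \<open>y\<^sup>2 = Y\<close>. Hence the complements of the
  blocks are exactly the 5-subsets of \<open>U\<close> that are zero sets of some \<open>H\<close>.

  Comparing \<open>H\<close> with \<open>y\<close> times the product of its linear factors shows that a 5-subset of \<open>U\<close>
  is such a zero set iff its second and third elementary symmetric functions vanish. For
  distinct \<open>a, b, c \<in> U\<close> these two equations are linear in the sum and the product of the
  remaining pair \<open>{d, e}\<close>, with determinant \<open>ab + bc + ca - (a + b + c)\<^sup>2 \<noteq> 0\<close>, so there is
  at most one block through \<open>a, b, c\<close>. A solution is given by the images of the two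
  primitive cube roots of unity, which lie in \<open>GF(q)\<close> because \<open>m\<close> is even, under the
  Moebius map sending \<open>0, 1, \<infinity>\<close> to \<open>a, b, c\<close>. Thus the complements form a Steiner system
  \<open>S(3, 5, q + 1)\<close>, and the value of \<open>\<lambda>\<close> for the blocks follows by inclusion-exclusion.
\<close>

section \<open>Finite fields\<close>

lemma finite_ring_of_nat_card: "of_nat CARD('a) = (0::'a::{ring_1,finite})"
proof -
  have "(\<Sum>y\<in>UNIV. y + 1) = (\<Sum>y::'a\<in>UNIV. y)"
    by (rule sum.reindex_bij_witness[of _ "\<lambda>y. y - 1" "\<lambda>y. y + 1"]) auto
  thus ?thesis
    by (simp add: sum.distrib)
qed

lemma finite_field_pow_card_minus_one:
  fixes x :: "'a::{field,finite}"
  assumes "x \<noteq> 0"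
  shows "x ^ (CARD('a) - 1) = 1"
proof -
  let ?S = "UNIV - {0::'a}"
  have "x ^ card ?S * \<Prod>?S = (\<Prod>y\<in>?S. x * y)"
    by (simp add: prod.distrib)
  also have "\<dots> = \<Prod>?S"
    by (rule prod.reindex_bij_witness[of _ "\<lambda>y. y / x" "\<lambda>y. x * y"]) (use assms in auto)
  finally have "x ^ card ?S = 1"
    by simp
  thus ?thesis
    by (simp add: card_Diff_singleton)
qed

lemma finite_field_pow_card:
  fixes x :: "'a::{field,finite}"
  shows "x ^ CARD('a) = x"
proof (cases "x = 0")
  case False
  have "x ^ CARD('a) = x * x ^ (CARD('a) - 1)"
    using finite_UNIV_card_ge_0[where 'a='a] by (simp flip: power_Suc)
  thus ?thesis
    using finite_field_pow_card_minus_one[OF False] by simp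
qed (use finite_UNIV_card_ge_0[where 'a='a] in simp)

lemma card_pow_eq_le:
  fixes c :: "'a::idom"
  assumes "n \<ge> 1"
  shows "card {x. x ^ n = c} \<le> n"
proof -
  let ?p = "monom 1 n + [:-c:]"
  have "degree ?p = n"
    using assms by (subst degree_add_eq_left) (auto simp: degree_monom_eq)
  moreover have "?p \<noteq> 0"
    using calculation assms by auto
  ultimately show ?thesis
    using card_poly_roots_bound[of ?p] by (simp add: poly_monom)
qed

lemma quartic_eq_0_imp_coeffs_eq_0:
  fixes c0 c1 c2 c3 c4 :: "'a::idom"
  assumes zero: "\<And>x. x \<in> A \<Longrightarrow> c4 * x^4 + c3 * x^3 + c2 * x^2 + c1 * x + c0 = 0"
    and card: "card A \<ge> 5"
  shows "c0 = 0 \<and> c1 = 0 \<and> c2 = 0 \<and> c3 = 0 \<and> c4 = 0"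
proof -
  let ?p = "Poly [c0, c1, c2, c3, c4]"
  have "?p = 0"
  proof (rule ccontr)
    assume "?p \<noteq> 0"
    have "A \<subseteq> {x. poly ?p x = 0}"
      using zero by (auto simp: algebra_simps power2_eq_square power3_eq_cube power4_eq_xxxx)
    hence "card A \<le> card {x. poly ?p x = 0}"
      using poly_roots_finite[OF \<open>?p \<noteq> 0\<close>] by (rule card_mono[rotated])
    also have "\<dots> \<le> degree ?p"
      using \<open>?p \<noteq> 0\<close> by (rule card_poly_roots_bound)
    also have "\<dots> \<le> 4"
      using degree_Poly[of "[c0, c1, c2, c3, c4]"] by simp
    finally show False
      using card by simp
  qed
  hence "coeff ?p i = 0" for i
    by simp
  from this[of 0] this[of 1] this[of 2] this[of 3] this[of 4] show ?thesis
    by (simp add: nth_default_def numeral_eq_Suc)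
qed

lemma exists_nontrivial_cube_root_of_unity:
  assumes "3 dvd CARD('a::{field,finite}) - 1"
  shows "\<exists>x::'a. x ^ 3 = 1 \<and> x \<noteq> 1"
proof (rule ccontr)
  assume no_root: "\<not> ?thesis"
  let ?S = "UNIV - {0::'a}"
  obtain M where M: "CARD('a) - 1 = 3 * M"
    using assms by blast
  have card_S: "card ?S = 3 * M"
    using M by (simp add: card_Diff_singleton)
  have "(1::'a) \<in> ?S"
    by simp
  hence "card ?S > 0"
    using card_gt_0_iff[of ?S] finite[of ?S] by blast
  hence "M \<ge> 1"
    using card_S by simp
  have "inj_on (\<lambda>x. x ^ 3) ?S"
  proof (rule inj_onI)
    fix x y assume "x \<in> ?S" "y \<in> ?S" "x ^ 3 = y ^ 3"
    hence "(x / y) ^ 3 = 1"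
      by (simp add: power_divide)
    with no_root \<open>y \<in> ?S\<close> show "x = y"
      by auto
  qed
  hence cubes: "(\<lambda>x. x ^ 3) ` ?S = ?S"
    by (intro card_subset_eq) (auto simp: card_image)
  \<comment> \<open>so every nonzero element is a cube, hence a root of \<open>y ^ M = 1\<close>\<close>
  have "?S \<subseteq> {y. y ^ M = 1}"
  proof
    fix y assume "y \<in> ?S"
    then obtain x where "x \<in> ?S" "y = x ^ 3"
      using cubes by blast
    thus "y \<in> {y. y ^ M = 1}"
      using finite_field_pow_card_minus_one[of x] M by (simp add: power_mult)
  qed
  hence "3 * M \<le> card {y::'a. y ^ M = 1}"
    using card_S card_mono[OF finite] by metis
  also have "\<dots> \<le> M"
    using \<open>M \<ge> 1\<close> by (rule card_pow_eq_le)
  finally show False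
    using \<open>M \<ge> 1\<close> by simp
qed

lemma CHAR_2_add_self:
  fixes x :: "'a::ring_1"
  assumes "CHAR('a) = 2"
  shows "x + x = 0"
  using uminus_CHAR_2[OF assms, of x] by (simp add: add_eq_0_iff2)

lemma CHAR_2_add_eq_0_iff:
  fixes x y :: "'a::ring_1"
  assumes "CHAR('a) = 2"
  shows "x + y = 0 \<longleftrightarrow> x = y"
  using minus_CHAR_2[OF assms, of x y] by (metis eq_iff_diff_eq_0)

lemma CHAR_2_numeral_Bit0:
  assumes "CHAR('a::ring_1) = 2"
  shows "numeral (Num.Bit0 k) = (0::'a)"
  using CHAR_2_add_self[OF assms] by (simp only: numeral_Bit0)

lemma CHAR_2_numeral_Bit1:
  assumes "CHAR('a::ring_1) = 2"
  shows "numeral (Num.Bit1 k) = (1::'a)"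
  using CHAR_2_add_self[OF assms] by (simp only: numeral_Bit1 numeral_Bit0 add_0)

section \<open>Steiner systems S(3, 5, v) and their complements\<close>

lemma card_filter_eq_sum: "finite A \<Longrightarrow> card {x \<in> A. P x} = (\<Sum>x\<in>A. if P x then 1 else 0)"
  using sum.inter_filter[of A "\<lambda>_. 1::nat" P] by simp

lemma finite_blocks:
  assumes "finite P" "\<And>B. B \<in> Bs \<Longrightarrow> B \<subseteq> P"
  shows "finite Bs"
  by (rule finite_subset[of Bs "Pow P"]) (use assms in auto)

lemma double_count_blocks:
  fixes P :: "'a set" and Bs :: "'a set set"
  assumes "finite P" and blocks: "\<And>B. B \<in> Bs \<Longrightarrow> B \<subseteq> P \<and> card B = k"
    and J: "J \<subseteq> P" "card J = j"
  shows "(\<Sum>x\<in>P - J. card {B \<in> Bs. insert x J \<subseteq> B}) = (k - j) * card {B \<in> Bs. J \<subseteq> B}"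
proof -
  have "finite Bs"
    by (rule finite_blocks[OF \<open>finite P\<close>]) (use blocks in blast)
  have "finite J"
    using J \<open>finite P\<close> finite_subset by blast
  have "(\<Sum>x\<in>P - J. card {B \<in> Bs. insert x J \<subseteq> B})
      = (\<Sum>x\<in>P - J. \<Sum>B\<in>Bs. if insert x J \<subseteq> B then 1 else 0)"
    using \<open>finite Bs\<close> by (simp add: card_filter_eq_sum)
  also have "\<dots> = (\<Sum>B\<in>Bs. \<Sum>x\<in>P - J. if insert x J \<subseteq> B then 1 else 0)"
    by (rule sum.swap)
  also have "\<dots> = (\<Sum>B\<in>Bs. if J \<subseteq> B then k - j else 0)"
  proof (rule sum.cong[OF refl])
    fix B assume "B \<in> Bs"
    have "(\<Sum>x\<in>P - J. if insert x J \<subseteq> B then 1 else 0) = card {x \<in> P - J. insert x J \<subseteq> B}"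
      by (rule card_filter_eq_sum[symmetric]) (use \<open>finite P\<close> in simp)
    also have "{x \<in> P - J. insert x J \<subseteq> B} = (if J \<subseteq> B then B - J else {})"
      using blocks[OF \<open>B \<in> Bs\<close>] by auto
    also have "card \<dots> = (if J \<subseteq> B then k - j else 0)"
      using blocks[OF \<open>B \<in> Bs\<close>] J \<open>finite J\<close> by (simp add: card_Diff_subset)
    finally show "(\<Sum>x\<in>P - J. if insert x J \<subseteq> B then 1 else 0) = (if J \<subseteq> B then k - j else 0)" .
  qed
  also have "\<dots> = (k - j) * card {B \<in> Bs. J \<subseteq> B}"
    using \<open>finite Bs\<close> by (simp add: card_filter_eq_sum sum_distrib_left if_distrib cong: if_cong)
  finally show ?thesis .
qed

lemma t_design_block:
  "is_t_design t v k lam P Bs \<Longrightarrow> B \<in> Bs \<Longrightarrow> B \<subseteq> P \<and> card B = k"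
  by (simp add: is_t_design_def)

lemma t_design_count:
  "is_t_design t v k lam P Bs \<Longrightarrow> T \<subseteq> P \<Longrightarrow> card T = t \<Longrightarrow> card {B \<in> Bs. T \<subseteq> B} = lam"
  by (simp add: is_t_design_def)

lemma t_design_finite_blocks: "is_t_design t v k lam P Bs \<Longrightarrow> finite Bs"
  by (rule finite_blocks) (auto simp: is_t_design_def)

lemma steiner_3_5_pair_count:
  assumes D: "is_t_design 3 v 5 1 P Bs" and J: "J \<subseteq> P" "card J = 2"
  shows "3 * card {B \<in> Bs. J \<subseteq> B} = v - 2"
proof -
  have P: "finite P" "card P = v"
    using D by (simp_all add: is_t_design_def)
  have "3 * card {B \<in> Bs. J \<subseteq> B} = (\<Sum>x\<in>P - J. card {B \<in> Bs. insert x J \<subseteq> B})"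
    using double_count_blocks[OF P(1) t_design_block[OF D] J] by simp
  also have "\<dots> = (\<Sum>x\<in>P - J. 1)"
  proof (rule sum.cong[OF refl])
    fix x assume x: "x \<in> P - J"
    have "finite J"
      using J P finite_subset by blast
    hence "insert x J \<subseteq> P" "card (insert x J) = 3"
      using x J by auto
    thus "card {B \<in> Bs. insert x J \<subseteq> B} = 1"
      by (rule t_design_count[OF D])
  qed
  also have "\<dots> = v - 2"
    using J P by (simp add: card_Diff_subset finite_subset)
  finally show ?thesis .
qed

lemma steiner_3_5_point_count:
  assumes D: "is_t_design 3 v 5 1 P Bs" and x: "x \<in> P"
  shows "12 * card {B \<in> Bs. {x} \<subseteq> B} = (v - 1) * (v - 2)"
proof -
  have P: "finite P" "card P = v"
    using D by (simp_all add: is_t_design_def)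
  have "12 * card {B \<in> Bs. {x} \<subseteq> B} = 3 * (4 * card {B \<in> Bs. {x} \<subseteq> B})"
    by simp
  also have "4 * card {B \<in> Bs. {x} \<subseteq> B} = (\<Sum>y\<in>P - {x}. card {B \<in> Bs. {y, x} \<subseteq> B})"
    using double_count_blocks[OF P(1) t_design_block[OF D], where J = "{x}" and j = 1] x by simp
  also have "3 * \<dots> = (\<Sum>y\<in>P - {x}. 3 * card {B \<in> Bs. {y, x} \<subseteq> B})"
    by (rule sum_distrib_left)
  also have "\<dots> = (\<Sum>y\<in>P - {x}. v - 2)"
  proof (rule sum.cong[OF refl])
    fix y assume "y \<in> P - {x}"
    thus "3 * card {B \<in> Bs. {y, x} \<subseteq> B} = v - 2"
      using x by (intro steiner_3_5_pair_count[OF D]) auto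
  qed
  also have "\<dots> = (v - 1) * (v - 2)"
    using x P by simp
  finally show ?thesis .
qed

lemma steiner_3_5_block_count:
  assumes D: "is_t_design 3 v 5 1 P Bs"
  shows "60 * card Bs = v * (v - 1) * (v - 2)"
proof -
  have P: "finite P" "card P = v"
    using D by (simp_all add: is_t_design_def)
  have "60 * card Bs = 12 * (5 * card Bs)"
    by simp
  also have "5 * card Bs = (\<Sum>x\<in>P. card {B \<in> Bs. {x} \<subseteq> B})"
    using double_count_blocks[OF P(1) t_design_block[OF D], where J = "{}" and j = 0] by simp
  also have "12 * \<dots> = (\<Sum>x\<in>P. 12 * card {B \<in> Bs. {x} \<subseteq> B})"
    by (rule sum_distrib_left)
  also have "\<dots> = (\<Sum>x\<in>P. (v - 1) * (v - 2))"
    by (rule sum.cong[OF refl steiner_3_5_point_count[OF D]])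
  also have "\<dots> = v * (v - 1) * (v - 2)"
    using P by simp
  finally show ?thesis .
qed

lemma card_blocks_avoiding_insert:
  assumes "finite Bs"
  shows "card {B \<in> Bs. J \<subseteq> B \<and> B \<inter> K = {}} = card {B \<in> Bs. J \<subseteq> B \<and> B \<inter> insert x K = {}}
    + card {B \<in> Bs. insert x J \<subseteq> B \<and> B \<inter> K = {}}"
proof -
  have "{B \<in> Bs. J \<subseteq> B \<and> B \<inter> K = {}} = {B \<in> Bs. J \<subseteq> B \<and> B \<inter> insert x K = {}}
      \<union> {B \<in> Bs. insert x J \<subseteq> B \<and> B \<inter> K = {}}"
    by auto
  moreover have "{B \<in> Bs. J \<subseteq> B \<and> B \<inter> insert x K = {}} \<inter> {B \<in> Bs. insert x J \<subseteq> B \<and> B \<inter> K = {}} = {}"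
    by auto
  ultimately show ?thesis
    using assms by (simp add: card_Un_disjoint)
qed

lemma card_blocks_avoiding_triple:
  assumes "finite Bs"
  shows "int (card {B \<in> Bs. B \<inter> {t1, t2, t3} = {}}) = int (card Bs)
    - int (card {B \<in> Bs. {t1} \<subseteq> B}) - int (card {B \<in> Bs. {t2} \<subseteq> B})
    - int (card {B \<in> Bs. {t3} \<subseteq> B}) + int (card {B \<in> Bs. {t1, t2} \<subseteq> B})
    + int (card {B \<in> Bs. {t1, t3} \<subseteq> B}) + int (card {B \<in> Bs. {t2, t3} \<subseteq> B})
    - int (card {B \<in> Bs. {t1, t2, t3} \<subseteq> B})"
proof -
  define avoid where "avoid J K = int (card {B \<in> Bs. J \<subseteq> B \<and> B \<inter> K = {}})" for J K
  have "avoid J (insert x K) = avoid J K - avoid (insert x J) K" for J K x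
    unfolding avoid_def using card_blocks_avoiding_insert[OF assms, of J K x] by simp
  moreover have "avoid J {} = int (card {B \<in> Bs. J \<subseteq> B})" for J
    unfolding avoid_def by simp
  ultimately have "avoid {} {t1, t2, t3} = int (card {B \<in> Bs. {} \<subseteq> B})
    - int (card {B \<in> Bs. {t1} \<subseteq> B}) - int (card {B \<in> Bs. {t2} \<subseteq> B})
    - int (card {B \<in> Bs. {t3} \<subseteq> B}) + int (card {B \<in> Bs. {t1, t2} \<subseteq> B})
    + int (card {B \<in> Bs. {t1, t3} \<subseteq> B}) + int (card {B \<in> Bs. {t2, t3} \<subseteq> B})
    - int (card {B \<in> Bs. {t1, t2, t3} \<subseteq> B})"
    by (simp only: insert_commute)
  thus ?thesis
    unfolding avoid_def by simp
qed

lemma steiner_3_5_avoiding_count: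
  assumes D: "is_t_design 3 v 5 1 P Bs" and T: "T \<subseteq> P" "card T = 3"
  shows "60 * int (card {B \<in> Bs. B \<inter> T = {}}) = (int v - 5) * (int v - 6) * (int v - 7)"
proof -
  obtain t1 t2 t3 where t: "T = {t1, t2, t3}" "t1 \<noteq> t2" "t2 \<noteq> t3" "t1 \<noteq> t3"
    using T(2) by (metis card_3_iff)
  have "v \<ge> 3"
    using card_mono[OF _ T(1)] T(2) D by (simp add: is_t_design_def)
  define c where "c J = int (card {B \<in> Bs. J \<subseteq> B})" for J
  have pair: "3 * c {x, y} = int v - 2" if "x \<in> T" "y \<in> T" "x \<noteq> y" for x y
  proof -
    have "3 * card {B \<in> Bs. {x, y} \<subseteq> B} = v - 2"
      by (rule steiner_3_5_pair_count[OF D]) (use that T in auto)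
    from arg_cong[where f = int, OF this] show ?thesis
      using \<open>v \<ge> 3\<close> unfolding c_def by (simp add: of_nat_diff)
  qed
  have point: "12 * c {x} = (int v - 1) * (int v - 2)" if "x \<in> T" for x
  proof -
    have "12 * card {B \<in> Bs. {x} \<subseteq> B} = (v - 1) * (v - 2)"
      using steiner_3_5_point_count[OF D] that T by blast
    from arg_cong[where f = int, OF this] show ?thesis
      using \<open>v \<ge> 3\<close> unfolding c_def by (simp add: of_nat_diff)
  qed
  have all: "60 * int (card Bs) = int v * (int v - 1) * (int v - 2)"
    using arg_cong[where f = int, OF steiner_3_5_block_count[OF D]] \<open>v \<ge> 3\<close>
    by (simp add: of_nat_diff)
  have triple: "c {t1, t2, t3} = 1"
    using t_design_count[OF D T] unfolding c_def t(1) by simp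
  have "60 * int (card {B \<in> Bs. B \<inter> T = {}}) = 60 * int (card Bs)
      - 5 * (12 * c {t1}) - 5 * (12 * c {t2}) - 5 * (12 * c {t3})
      + 20 * (3 * c {t1, t2}) + 20 * (3 * c {t1, t3}) + 20 * (3 * c {t2, t3}) - 60 * c {t1, t2, t3}"
    unfolding t(1) card_blocks_avoiding_triple[OF t_design_finite_blocks[OF D]] c_def by simp
  also have "\<dots> = (int v - 5) * (int v - 6) * (int v - 7)"
  proof -
    have mem: "t1 \<in> T" "t2 \<in> T" "t3 \<in> T"
      using t(1) by simp_all
    show ?thesis
      unfolding all triple point[OF mem(1)] point[OF mem(2)] point[OF mem(3)]
        pair[OF mem(1,2) t(2)] pair[OF mem(1,3) t(4)] pair[OF mem(2,3) t(3)]
      by (simp add: algebra_simps)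
  qed
  finally show ?thesis .
qed

lemma complement_blocks_complement_blocks:
  assumes "\<And>B. B \<in> Bs \<Longrightarrow> B \<subseteq> P"
  shows "complement_blocks P (complement_blocks P Bs) = Bs"
proof -
  have "complement_blocks P (complement_blocks P Bs) = (\<lambda>B. P - (P - B)) ` Bs"
    unfolding complement_blocks_def by (rule image_image)
  also have "\<dots> = Bs"
    using assms by (simp add: double_diff)
  finally show ?thesis .
qed

lemma complement_steiner_3_5_design:
  assumes D: "is_t_design 3 v 5 1 P Bs" and "10 \<le> v"
  shows "is_t_design 3 v (v - 5) ((v - 5) * (v - 6) * (v - 7) div 60) P (complement_blocks P Bs)"
proof -
  have P: "finite P" "card P = v"
    using D by (simp_all add: is_t_design_def)
  have blocks: "B \<subseteq> P" "card B = 5" if "B \<in> Bs" for B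
    using t_design_block[OF D that] by simp_all
  have count: "card {B' \<in> complement_blocks P Bs. T \<subseteq> B'} = (v - 5) * (v - 6) * (v - 7) div 60"
    if T: "T \<subseteq> P" "card T = 3" for T
  proof -
    have "{B' \<in> complement_blocks P Bs. T \<subseteq> B'} = (\<lambda>B. P - B) ` {B \<in> Bs. B \<inter> T = {}}"
      unfolding complement_blocks_def using T by blast
    moreover have "inj_on (\<lambda>B. P - B) Bs"
      using blocks by (intro inj_onI) (metis double_diff order_refl)
    ultimately have "card {B' \<in> complement_blocks P Bs. T \<subseteq> B'} = card {B \<in> Bs. B \<inter> T = {}}"
      by (simp add: card_image inj_on_subset)
    moreover have "int (60 * card {B \<in> Bs. B \<inter> T = {}}) = int ((v - 5) * (v - 6) * (v - 7))"
      using steiner_3_5_avoiding_count[OF D T] \<open>10 \<le> v\<close> by (simp add: of_nat_diff)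
    hence "(v - 5) * (v - 6) * (v - 7) = 60 * card {B \<in> Bs. B \<inter> T = {}}"
      by (simp only: of_nat_eq_iff)
    ultimately show ?thesis
      by simp
  qed
  have "5 * 4 * 3 \<le> (v - 5) * (v - 6) * (v - 7)"
    using \<open>10 \<le> v\<close> by (intro mult_le_mono) simp_all
  hence "(v - 5) * (v - 6) * (v - 7) div 60 > 0"
    by simp
  moreover have "B' \<subseteq> P \<and> card B' = v - 5" if B': "B' \<in> complement_blocks P Bs" for B'
  proof -
    obtain B where B: "B \<in> Bs" "B' = P - B"
      using B' unfolding complement_blocks_def by blast
    moreover have "finite B"
      using blocks(1)[OF B(1)] P(1) finite_subset by blast
    ultimately show ?thesis
      using blocks[OF B(1)] P by (simp add: card_Diff_subset)
  qed
  ultimately show ?thesis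
    unfolding is_t_design_def using P count by blast
qed

section \<open>The field GF(q^2) and its unit circle\<close>

locale gf_q_squared =
  fixes field_type :: "'a::{field,finite} itself" and n q :: nat
  assumes q_eq: "q = 2 ^ n"
    and even_n: "even n"
    and n_ge_4: "4 \<le> n"
    and card_field: "CARD('a) = q\<^sup>2"
begin

abbreviation U :: "'a set" where
  "U \<equiv> roots_unity q"

lemma q_ge_16: "16 \<le> q"
proof -
  have "(2::nat) ^ 4 \<le> 2 ^ n"
    using n_ge_4 by (rule power_increasing) simp
  thus ?thesis
    using q_eq by simp
qed

lemma q_mod_3: "q mod 3 = 1"
proof -
  obtain k where "n = 2 * k"
    using even_n by blast
  hence "q = 4 ^ k"
    using q_eq by (simp add: power_mult)
  thus ?thesis
    using power_mod[of "4::nat" 3 k] by simp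
qed

lemma CHAR_eq_2: "CHAR('a) = 2"
proof -
  have "CHAR('a) dvd CARD('a)"
    using finite_ring_of_nat_card[where 'a='a] by (simp only: of_nat_eq_0_iff_char_dvd)
  hence "CHAR('a) dvd 2 ^ (2 * n)"
    using card_field q_eq by (simp add: power_mult mult.commute)
  moreover have "prime CHAR('a)"
    by (simp add: prime_CHAR_semidom finite_imp_CHAR_pos)
  ultimately show ?thesis
    by (metis prime_dvd_power two_is_prime_nat primes_dvd_imp_eq)
qed

lemmas add_self_eq_0 [simp] = CHAR_2_add_self[OF CHAR_eq_2]
  and add_eq_0_iff_eq = CHAR_2_add_eq_0_iff[OF CHAR_eq_2]
  and numeral_Bit0_eq_0 [simp] = CHAR_2_numeral_Bit0[OF CHAR_eq_2]
  and numeral_Bit1_eq_1 [simp] = CHAR_2_numeral_Bit1[OF CHAR_eq_2]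

lemma power2_add: "((x::'a) + y)\<^sup>2 = x\<^sup>2 + y\<^sup>2"
  by (rule freshmans_dream) (simp_all add: CHAR_eq_2)

lemma frobenius_add: "((x::'a) + y) ^ q = x ^ q + y ^ q"
  by (rule freshmans_dream') (simp_all add: CHAR_eq_2 q_eq)

lemma pow_q_squared: "(x::'a) ^ (q * q) = x"
  using finite_field_pow_card[of x] card_field by (simp add: power2_eq_square)

lemma frobenius_frobenius: "((x::'a) ^ q) ^ q = x"
  by (simp add: pow_q_squared flip: power_mult)

lemma pow_q_squared_minus_one: "(x::'a) \<noteq> 0 \<Longrightarrow> x ^ (q * q - 1) = 1"
  using finite_field_pow_card_minus_one[of x] card_field by (simp add: power2_eq_square)

lemma exists_sqrt: "\<exists>y. y\<^sup>2 = (x::'a)"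
proof
  have "even (q * q)"
    using q_eq n_ge_4 by simp
  thus "(x ^ (q * q div 2))\<^sup>2 = x"
    by (simp add: pow_q_squared flip: power_mult)
qed

lemma roots_unity_nonzero: "u \<in> U \<Longrightarrow> u \<noteq> 0"
  by (auto simp: roots_unity_def)

lemma roots_unity_pow_q: "u \<in> U \<Longrightarrow> u ^ q = inverse u"
  by (intro inverse_unique[symmetric]) (simp add: roots_unity_def)

lemma roots_unity_mult: "u \<in> U \<Longrightarrow> v \<in> U \<Longrightarrow> u * v \<in> U"
  by (simp add: roots_unity_def power_mult_distrib del: power_Suc)

lemma roots_unity_cube_eq_1:
  assumes "w \<in> U" "w ^ 3 = 1"
  shows "w = 1"
proof -
  have "\<exists>j. q + 1 = 3 * j + 2"
    using q_mod_3 by presburger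
  then obtain j where j: "q + 1 = 3 * j + 2" ..
  have "1 = w ^ (3 * j + 2)"
    using assms(1) j by (simp add: roots_unity_def del: power_Suc)
  also have "\<dots> = w\<^sup>2"
    using assms(2) by (simp add: power_add power_mult power2_eq_square)
  finally have "w\<^sup>2 = 1" ..
  moreover have "w ^ 3 = w\<^sup>2 * w"
    by (simp add: power2_eq_square power3_eq_cube)
  ultimately show ?thesis
    using assms(2) by simp
qed

lemma roots_unity_cube_inj:
  assumes "u \<in> U" "v \<in> U" "u ^ 3 = v ^ 3"
  shows "u = v"
proof -
  have "u / v \<in> U"
    using assms by (simp add: roots_unity_def power_divide del: power_Suc)
  moreover have "(u / v) ^ 3 = 1"
    using assms roots_unity_nonzero[of v] by (simp add: power_divide)
  ultimately have "u / v = 1"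
    by (rule roots_unity_cube_eq_1)
  thus ?thesis
    using roots_unity_nonzero[OF assms(2)] by simp
qed

lemma pow_q_minus_one_image_subset: "(\<lambda>y::'a. y ^ (q - 1)) ` (UNIV - {0}) \<subseteq> U"
proof
  fix u :: 'a
  assume "u \<in> (\<lambda>y. y ^ (q - 1)) ` (UNIV - {0})"
  then obtain y where "y \<noteq> 0" "u = y ^ (q - 1)"
    by blast
  moreover have "(q - 1) * (q + 1) = q * q - 1"
    using q_ge_16 by (simp add: algebra_simps)
  ultimately have "u ^ (q + 1) = y ^ (q * q - 1)"
    by (simp only: power_mult[symmetric])
  thus "u \<in> U"
    using pow_q_squared_minus_one[OF \<open>y \<noteq> 0\<close>] by (simp add: roots_unity_def)
qed

lemma card_roots_unity_le: "card U \<le> q + 1"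
  unfolding roots_unity_def by (rule card_pow_eq_le) simp

lemma card_pow_q_minus_one_image_ge: "q + 1 \<le> card ((\<lambda>y::'a. y ^ (q - 1)) ` (UNIV - {0}))"
proof -
  let ?f = "\<lambda>y::'a. y ^ (q - 1)"
  let ?I = "?f ` (UNIV - {0})"
  have "(q + 1) * (q - 1) = card (UNIV - {0::'a})"
    using card_field q_ge_16 by (simp add: card_Diff_singleton power2_eq_square algebra_simps)
  also have "\<dots> \<le> card (\<Union>w\<in>?I. {y. ?f y = w})"
    by (intro card_mono) auto
  also have "\<dots> \<le> (\<Sum>w\<in>?I. card {y. ?f y = w})"
    by (rule card_UN_le) simp
  also have "\<dots> \<le> (\<Sum>w\<in>?I. q - 1)"
    using q_ge_16 by (intro sum_mono card_pow_eq_le) simp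
  also have "\<dots> = card ?I * (q - 1)"
    by simp
  finally show ?thesis
    using q_ge_16 by (simp only: mult_le_cancel2)
qed

lemma roots_unity_eq_image: "U = (\<lambda>y. y ^ (q - 1)) ` (UNIV - {0})"
  using card_pow_q_minus_one_image_ge card_roots_unity_le
    card_mono[OF finite pow_q_minus_one_image_subset]
  by (intro card_subset_eq[symmetric] pow_q_minus_one_image_subset) auto

lemma card_roots_unity: "card U = q + 1"
  using card_pow_q_minus_one_image_ge card_roots_unity_le roots_unity_eq_image by simp

lemma exists_cube_root_of_unity_in_subfield: "\<exists>w::'a. w\<^sup>2 + w + 1 = 0 \<and> w ^ q = w"
proof -
  have "\<exists>j. q = 3 * j + 1"
    using q_mod_3 by presburger
  then obtain j where j: "q = 3 * j + 1" ..
  have "CARD('a) - 1 = 3 * (3 * j * j + 2 * j)"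
    using card_field by (simp add: j power2_eq_square algebra_simps)
  hence "3 dvd CARD('a) - 1" ..
  then obtain w :: 'a where w: "w ^ 3 = 1" "w \<noteq> 1"
    using exists_nontrivial_cube_root_of_unity by blast
  have "(w - 1) * (w\<^sup>2 + w + 1) = 0"
    using w(1) by (simp add: algebra_simps power2_eq_square power3_eq_cube)
  hence "w\<^sup>2 + w + 1 = 0"
    using w(2) by simp
  moreover have "w ^ q = w"
    using w(1) by (simp add: j power_add power_mult)
  ultimately show ?thesis
    by blast
qed

end

section \<open>Codewords and the quintic H\<close>

definition quintic :: "nat \<Rightarrow> 'a::field \<Rightarrow> 'a \<Rightarrow> 'a \<Rightarrow> 'a" where
  "quintic q x y u = y * u ^ 5 + x * u ^ 4 + x ^ q * u + y ^ q"

definition quintic_roots :: "nat \<Rightarrow> 'a::field \<Rightarrow> 'a \<Rightarrow> 'a set" where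
  "quintic_roots q x y = {u \<in> roots_unity q. quintic q x y u = 0}"

definition quintic_blocks :: "nat \<Rightarrow> 'a::field set set" where
  "quintic_blocks q = {quintic_roots q x y | x y. card (quintic_roots q x y) = 5}"

context gf_q_squared
begin

lemma quintic_roots_subset: "quintic_roots q x y \<subseteq> U"
  by (auto simp: quintic_roots_def)

lemma trace_codeword_on_roots_unity:
  assumes u: "u \<in> U"
  shows "u ^ 5 * trace_q2q q (a3 * u ^ 3 + b * u ^ (q - 2) + a5 * u ^ 5 + c * u ^ (q - 4))
    = (a3 + b ^ q) * u ^ 8 + (a3 + b ^ q) ^ q * u\<^sup>2 + (a5 + c ^ q) * u ^ 10 + (a5 + c ^ q) ^ q"
proof -
  have nz: "u \<noteq> 0"
    using u roots_unity_nonzero by blast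
  have pow_inverse: "u ^ (q + 1 - k) = inverse u ^ k" if "k \<le> q + 1" for k
  proof -
    have "u ^ (q + 1 - k) * u ^ k = 1"
      using u that by (simp add: roots_unity_def flip: power_add)
    thus ?thesis
      using nz by (simp add: power_inverse field_simps)
  qed
  have p2: "u ^ (q - 2) = inverse u ^ 3" and p4: "u ^ (q - 4) = inverse u ^ 5"
    using pow_inverse[of 3] pow_inverse[of 5] q_ge_16 by (simp_all add: numeral_eq_Suc)
  have frob_u: "(u ^ k) ^ q = inverse u ^ k" for k
    using roots_unity_pow_q[OF u] by (metis power_mult mult.commute)
  have frob_inv: "(inverse u ^ k) ^ q = u ^ k" for k
    using frob_u by (simp add: power_inverse)
  have trace: "trace_q2q q (a3 * u ^ 3 + b * u ^ (q - 2) + a5 * u ^ 5 + c * u ^ (q - 4))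
      = a3 * u ^ 3 + b * inverse u ^ 3 + a5 * u ^ 5 + c * inverse u ^ 5
        + (a3 ^ q * inverse u ^ 3 + b ^ q * u ^ 3 + a5 ^ q * inverse u ^ 5 + c ^ q * u ^ 5)"
    unfolding trace_q2q_def p2 p4 by (simp add: frobenius_add power_mult_distrib frob_u frob_inv)
  have frob_coeffs: "(a3 + b ^ q) ^ q = a3 ^ q + b" "(a5 + c ^ q) ^ q = a5 ^ q + c"
    by (simp_all add: frobenius_add frobenius_frobenius)
  show ?thesis
    unfolding trace frob_coeffs using nz by (simp add: field_simps eval_nat_numeral)
qed

lemma quintic_squared:
  fixes x y u :: 'a
  assumes "x\<^sup>2 = X" "y\<^sup>2 = Y"
  shows "(quintic q x y u)\<^sup>2 = X * u ^ 8 + X ^ q * u\<^sup>2 + Y * u ^ 10 + Y ^ q"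
proof -
  have "(quintic q x y u)\<^sup>2 = (y * u ^ 5)\<^sup>2 + (x * u ^ 4)\<^sup>2 + (x ^ q * u)\<^sup>2 + (y ^ q)\<^sup>2"
    unfolding quintic_def by (simp add: power2_add)
  also have "\<dots> = X * u ^ 8 + X ^ q * u\<^sup>2 + Y * u ^ 10 + Y ^ q"
  proof -
    have sq_frob: "(z ^ q)\<^sup>2 = (z\<^sup>2) ^ q" for z :: 'a
      by (simp add: mult.commute flip: power_mult)
    show ?thesis
      unfolding power_mult_distrib sq_frob assms by (simp add: algebra_simps flip: power_mult)
  qed
  finally show ?thesis .
qed

lemma trace_codeword_eq_0_iff:
  assumes "u \<in> U" "x\<^sup>2 = a3 + b ^ q" "y\<^sup>2 = a5 + c ^ q"
  shows "trace_q2q q (a3 * u ^ 3 + b * u ^ (q - 2) + a5 * u ^ 5 + c * u ^ (q - 4)) = 0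
    \<longleftrightarrow> quintic q x y u = 0"
proof -
  have "u ^ 5 * trace_q2q q (a3 * u ^ 3 + b * u ^ (q - 2) + a5 * u ^ 5 + c * u ^ (q - 4))
      = (quintic q x y u)\<^sup>2"
    using trace_codeword_on_roots_unity[OF assms(1)] quintic_squared[OF assms(2,3)] by simp
  thus ?thesis
    using roots_unity_nonzero[OF assms(1)] by (metis mult_eq_0_iff power_eq_0_iff zero_power2)
qed

lemma trace_codeword_supp:
  assumes "g \<in> trace_code q (code_C35 q)"
  shows "\<exists>x y. supp_on U g = U - quintic_roots q x y"
proof -
  obtain a3 b a5 c
    where g: "g = (\<lambda>u. trace_q2q q (a3 * u ^ 3 + b * u ^ (q - 2) + a5 * u ^ 5 + c * u ^ (q - 4)))"
    using assms unfolding trace_code_def code_C35_def by blast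
  obtain x y where "x\<^sup>2 = a3 + b ^ q" "y\<^sup>2 = a5 + c ^ q"
    using exists_sqrt by metis
  hence "supp_on U g = U - quintic_roots q x y"
    using trace_codeword_eq_0_iff by (auto simp: g supp_on_def quintic_roots_def)
  thus ?thesis
    by blast
qed

lemma quintic_roots_complement_is_supp:
  fixes x y :: 'a
  shows "\<exists>g \<in> trace_code q (code_C35 q). supp_on U g = U - quintic_roots q x y"
proof
  let ?f = "\<lambda>u. x\<^sup>2 * u ^ 3 + 0 * u ^ (q - 2) + y\<^sup>2 * u ^ 5 + 0 * u ^ (q - 4)"
  have "?f \<in> code_C35 q"
    unfolding code_C35_def by blast
  thus "(\<lambda>u. trace_q2q q (?f u)) \<in> trace_code q (code_C35 q)"
    unfolding trace_code_def by (intro CollectI exI[of _ ?f] conjI refl)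
  have "(0::'a) ^ q = 0"
    using q_ge_16 by simp
  thus "supp_on U (\<lambda>u. trace_q2q q (?f u)) = U - quintic_roots q x y"
    using trace_codeword_eq_0_iff[of _ x "x\<^sup>2" 0 y "y\<^sup>2" 0]
    by (auto simp: supp_on_def quintic_roots_def)
qed

lemma card_roots_unity_diff_eq_iff:
  assumes "Z \<subseteq> U"
  shows "card (U - Z) = q - 4 \<longleftrightarrow> card Z = 5"
proof -
  have "card (U - Z) = q + 1 - card Z"
    using assms by (simp add: card_Diff_subset finite_subset card_roots_unity)
  moreover have "card Z \<le> q + 1"
    using card_mono[OF finite assms] card_roots_unity by simp
  ultimately show ?thesis
    using q_ge_16 by presburger
qed

lemma complement_blocks_weight_q_minus_4:
  "complement_blocks U (blocks_of_weight U (trace_code q (code_C35 q)) (q - 4)) = quintic_blocks q"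
proof (intro set_eqI iffI)
  fix Z :: "'a set"
  assume "Z \<in> complement_blocks U (blocks_of_weight U (trace_code q (code_C35 q)) (q - 4))"
  then obtain g where g: "g \<in> trace_code q (code_C35 q)" "card (supp_on U g) = q - 4"
    "Z = U - supp_on U g"
    unfolding complement_blocks_def blocks_of_weight_def by blast
  then obtain x y where "supp_on U g = U - quintic_roots q x y"
    using trace_codeword_supp by blast
  hence Z: "Z = quintic_roots q x y"
    using g(3) quintic_roots_subset by auto
  have "U - Z = supp_on U g"
    using g(3) by (auto simp: supp_on_def)
  hence "card Z = 5"
    using g(2) card_roots_unity_diff_eq_iff[of Z] Z quintic_roots_subset by simp
  with Z show "Z \<in> quintic_blocks q"
    unfolding quintic_blocks_def by blast
next
  fix Z :: "'a set"
  assume "Z \<in> quintic_blocks q"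
  then obtain x y where Z: "Z = quintic_roots q x y" "card Z = 5"
    unfolding quintic_blocks_def by blast
  hence "Z \<subseteq> U"
    using quintic_roots_subset by simp
  obtain g where g: "g \<in> trace_code q (code_C35 q)" "supp_on U g = U - Z"
    using quintic_roots_complement_is_supp Z(1) by blast
  have "card (supp_on U g) = q - 4"
    unfolding g(2) using card_roots_unity_diff_eq_iff[OF \<open>Z \<subseteq> U\<close>] Z(2) by simp
  hence "supp_on U g \<in> blocks_of_weight U (trace_code q (code_C35 q)) (q - 4)"
    unfolding blocks_of_weight_def using g(1) by blast
  moreover have "Z = U - supp_on U g"
    using g(2) \<open>Z \<subseteq> U\<close> by (simp add: double_diff)
  ultimately show "Z \<in> complement_blocks U (blocks_of_weight U (trace_code q (code_C35 q)) (q - 4))"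
    unfolding complement_blocks_def by (rule rev_image_eqI)
qed

end

section \<open>Zero sets of H and elementary symmetric functions\<close>

definition elem_sym2 :: "'a::comm_ring \<Rightarrow> 'a \<Rightarrow> 'a \<Rightarrow> 'a \<Rightarrow> 'a \<Rightarrow> 'a" where
  "elem_sym2 a b c d e = a*b + a*c + a*d + a*e + b*c + b*d + b*e + c*d + c*e + d*e"

definition elem_sym3 :: "'a::comm_ring \<Rightarrow> 'a \<Rightarrow> 'a \<Rightarrow> 'a \<Rightarrow> 'a \<Rightarrow> 'a" where
  "elem_sym3 a b c d e = a*b*c + a*b*d + a*b*e + a*c*d + a*c*e + a*d*e + b*c*d + b*c*e + b*d*e + c*d*e"

lemma elem_sym2_split:
  "elem_sym2 a b c d e = (a*b + b*c + c*a) + (a + b + c) * (d + e) + d * e"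
  unfolding elem_sym2_def by (simp add: algebra_simps)

lemma elem_sym3_split:
  "elem_sym3 a b c d e = a*b*c + (a*b + b*c + c*a) * (d + e) + (a + b + c) * (d * e)"
  unfolding elem_sym3_def by (simp add: algebra_simps)

lemma prod_five_linear_factors:
  fixes u a b c d e :: "'a::comm_ring_1"
  shows "(u + a) * (u + b) * (u + c) * (u + d) * (u + e) = u ^ 5 + (a + b + c + d + e) * u ^ 4
    + elem_sym2 a b c d e * u ^ 3 + elem_sym3 a b c d e * u\<^sup>2
    + (a*b*c*d + a*b*c*e + a*b*d*e + a*c*d*e + b*c*d*e) * u + a*b*c*d*e"
  unfolding elem_sym2_def elem_sym3_def by (simp add: eval_nat_numeral algebra_simps)

lemma elem_sym_divide_clear:
  fixes a b c N1 N2 D1 D2 :: "'a::field"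
  assumes "D1 \<noteq> 0" "D2 \<noteq> 0"
  shows "elem_sym2 a b c (N1 / D1) (N2 / D2) * (D1 * D2)
      = (a*b + b*c + c*a) * (D1 * D2) + (a + b + c) * (N1 * D2 + N2 * D1) + N1 * N2"
    and "elem_sym3 a b c (N1 / D1) (N2 / D2) * (D1 * D2)
      = a*b*c * (D1 * D2) + (a*b + b*c + c*a) * (N1 * D2 + N2 * D1) + (a + b + c) * (N1 * N2)"
  unfolding elem_sym2_split elem_sym3_split using assms by (simp_all add: field_simps)

context gf_q_squared
begin

lemma quintic_roots_elem_sym_eq_0:
  fixes a b c d e x y :: 'a
  assumes dist: "distinct [a, b, c, d, e]" and roots: "quintic_roots q x y = {a, b, c, d, e}"
  shows "elem_sym2 a b c d e = 0 \<and> elem_sym3 a b c d e = 0"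
proof (cases "y = 0")
  case True
  have zero_pow_q: "(0::'a) ^ q = 0"
    using q_ge_16 by simp
  show ?thesis
  proof (cases "x = 0")
    case True
    with \<open>y = 0\<close> have "quintic_roots q x y = U"
      by (auto simp: quintic_roots_def quintic_def zero_pow_q)
    moreover have "card {a, b, c, d, e} = 5"
      using dist by simp
    ultimately show ?thesis
      using roots card_roots_unity q_ge_16 by simp
  next
    case False
    \<comment> \<open>the roots in \<open>U\<close> of \<open>x u^4 + x^q u\<close> all have the same cube, contradicting injectivity of cubing\<close>
    have cube: "u ^ 3 = x ^ q / x" if "u \<in> quintic_roots q x y" for u
    proof -
      have u: "u \<in> U" "x * u ^ 4 + x ^ q * u = 0"
        using that \<open>y = 0\<close> by (auto simp: quintic_roots_def quintic_def zero_pow_q)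
      have "(x * u ^ 3 + x ^ q) * u = 0"
        using u(2) by (simp add: algebra_simps eval_nat_numeral)
      hence "x * u ^ 3 = x ^ q"
        using roots_unity_nonzero[OF u(1)] add_eq_0_iff_eq by simp
      thus ?thesis
        using False by (simp add: field_simps)
    qed
    have "a ^ 3 = b ^ 3"
      using cube roots by simp
    hence "a = b"
      using roots_unity_cube_inj roots quintic_roots_subset by blast
    thus ?thesis
      using dist by simp
  qed
next
  case False
  let ?c4 = "x - y * (a + b + c + d + e)" and ?c3 = "- (y * elem_sym2 a b c d e)"
    and ?c2 = "- (y * elem_sym3 a b c d e)"
    and ?c1 = "x ^ q - y * (a*b*c*d + a*b*c*e + a*b*d*e + a*c*d*e + b*c*d*e)"
    and ?c0 = "y ^ q - y * (a*b*c*d*e)"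
  \<comment> \<open>the difference of \<open>quintic q x y\<close> and \<open>y\<close> times the product of its roots is a quartic with five roots\<close>
  have quartic: "?c4 * v ^ 4 + ?c3 * v ^ 3 + ?c2 * v\<^sup>2 + ?c1 * v + ?c0 = 0"
    if "v \<in> {a, b, c, d, e}" for v
  proof -
    have "?c4 * v ^ 4 + ?c3 * v ^ 3 + ?c2 * v\<^sup>2 + ?c1 * v + ?c0
        = quintic q x y v - y * ((v + a) * (v + b) * (v + c) * (v + d) * (v + e))"
      unfolding quintic_def prod_five_linear_factors by (simp add: algebra_simps)
    also have "\<dots> = 0"
      using that roots by (auto simp: quintic_roots_def)
    finally show ?thesis .
  qed
  have "card {a, b, c, d, e} \<ge> 5"
    using dist by simp
  from quartic_eq_0_imp_coeffs_eq_0[OF quartic this] have "?c3 = 0 \<and> ?c2 = 0"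
    by blast
  thus ?thesis
    using False by simp
qed

lemma quintic_roots_eq_if_elem_sym_eq_0:
  assumes U: "v1 \<in> U" "v2 \<in> U" "v3 \<in> U" "v4 \<in> U" "v5 \<in> U"
    and sym: "elem_sym2 v1 v2 v3 v4 v5 = 0" "elem_sym3 v1 v2 v3 v4 v5 = 0"
  shows "\<exists>x y. quintic_roots q x y = {v1, v2, v3, v4, v5}"
proof -
  define e1 where "e1 = v1 + v2 + v3 + v4 + v5"
  define e4 where "e4 = v1*v2*v3*v4 + v1*v2*v3*v5 + v1*v2*v4*v5 + v1*v3*v4*v5 + v2*v3*v4*v5"
  define e5 where "e5 = v1 * v2 * v3 * v4 * v5"
  have nz: "v1 \<noteq> 0" "v2 \<noteq> 0" "v3 \<noteq> 0" "v4 \<noteq> 0" "v5 \<noteq> 0"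
    using U roots_unity_nonzero by auto
  \<comment> \<open>\<open>y ^ (q - 1) = e5\<close> and \<open>x = y e1\<close> make \<open>quintic q x y\<close> equal to \<open>y\<close> times the product of the \<open>u + v\<^sub>i\<close>\<close>
  have "e5 \<in> U"
    unfolding e5_def using U roots_unity_mult by simp
  then obtain y where y: "y \<noteq> 0" "y ^ (q - 1) = e5"
    using roots_unity_eq_image by auto
  have yq: "y ^ q = y * e5"
    using y(2) q_ge_16 by (metis power_Suc Suc_diff_1 less_le_trans zero_less_numeral)
  define x where "x = y * e1"
  have "x ^ q = y * e5 * (inverse v1 + inverse v2 + inverse v3 + inverse v4 + inverse v5)"
    unfolding x_def e1_def
    using U by (simp add: power_mult_distrib frobenius_add yq roots_unity_pow_q)
  also have "\<dots> = y * e4"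
    unfolding e5_def e4_def using nz by (simp add: field_simps)
  finally have xq: "x ^ q = y * e4" .
  have factor: "quintic q x y u = y * ((u + v1) * (u + v2) * (u + v3) * (u + v4) * (u + v5))" for u
  proof -
    have "quintic q x y u = y * u ^ 5 + (y * e1) * u ^ 4 + (y * e4) * u + y * e5"
      unfolding quintic_def xq yq by (simp add: x_def)
    also have "\<dots> = y * ((u + v1) * (u + v2) * (u + v3) * (u + v4) * (u + v5))"
      unfolding prod_five_linear_factors sym e1_def e4_def e5_def by (simp add: algebra_simps)
    finally show ?thesis .
  qed
  have "quintic_roots q x y = {v1, v2, v3, v4, v5}"
    using U y(1) by (auto simp: quintic_roots_def factor add_eq_0_iff_eq)
  thus ?thesis
    by blast
qed

lemma roots_unity_sym2_ne_sum_squared: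
  assumes U: "a \<in> U" "b \<in> U" "c \<in> U" and dist: "a \<noteq> b" "a \<noteq> c" "b \<noteq> c"
  shows "a*b + b*c + c*a \<noteq> (a + b + c)\<^sup>2"
proof
  define s where "s = a + b + c"
  define E2 where "E2 = a*b + b*c + c*a"
  define E3 where "E3 = a*b*c"
  assume "a*b + b*c + c*a = (a + b + c)\<^sup>2"
  hence E2s: "E2 = s\<^sup>2"
    unfolding E2_def s_def .
  have nz: "a \<noteq> 0" "b \<noteq> 0" "c \<noteq> 0"
    using U roots_unity_nonzero by auto
  \<comment> \<open>apply Frobenius, which inverts \<open>a, b, c\<close>, and clear denominators\<close>
  have "(inverse a * inverse b + inverse b * inverse c + inverse c * inverse a)
      = (inverse a + inverse b + inverse c)\<^sup>2"
  proof -
    have "E2 ^ q = (s ^ q)\<^sup>2"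
      using E2s by (simp add: mult.commute flip: power_mult)
    thus ?thesis
      unfolding E2_def s_def using U by (simp add: frobenius_add power_mult_distrib roots_unity_pow_q)
  qed
  moreover have "(inverse a * inverse b + inverse b * inverse c + inverse c * inverse a) * E3\<^sup>2
      = E3 * s"
    unfolding E3_def s_def using nz by (simp add: field_simps power2_eq_square)
  moreover have "(inverse a + inverse b + inverse c)\<^sup>2 * E3\<^sup>2 = E2\<^sup>2"
    unfolding E3_def E2_def using nz by (simp add: field_simps power2_eq_square)
  ultimately have "E3 * s = E2\<^sup>2"
    by simp
  hence prod0: "s * (E3 - s ^ 3) = 0"
    using E2s by (simp add: algebra_simps eval_nat_numeral)
  have ra: "a ^ 3 + s * a\<^sup>2 + E2 * a + E3 = 0" and rb: "b ^ 3 + s * b\<^sup>2 + E2 * b + E3 = 0"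
    unfolding s_def E2_def E3_def by (simp_all add: algebra_simps eval_nat_numeral)
  show False
  proof (cases "s = 0")
    case True
    hence "a ^ 3 = E3" "b ^ 3 = E3"
      using ra rb E2s by (simp_all add: add_eq_0_iff_eq)
    hence "a = b"
      using roots_unity_cube_inj U by simp
    thus False
      using dist by simp
  next
    case False
    hence "E3 = s ^ 3"
      using prod0 by simp
    hence "(a + s) ^ 3 = 0" "(b + s) ^ 3 = 0"
      using ra rb E2s
      by (simp_all add: algebra_simps eval_nat_numeral)
    hence "a = s" "b = s"
      using add_eq_0_iff_eq by auto
    thus False
      using dist by simp
  qed
qed

lemma elem_sym_eq_0_completion_unique:
  assumes U: "a \<in> U" "b \<in> U" "c \<in> U" and dist: "a \<noteq> b" "a \<noteq> c" "b \<noteq> c"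
    and sym: "elem_sym2 a b c d e = 0" "elem_sym3 a b c d e = 0"
      "elem_sym2 a b c d' e' = 0" "elem_sym3 a b c d' e' = 0"
  shows "{d', e'} \<subseteq> {d, e}"
proof -
  define s where "s = a + b + c"
  define E2 where "E2 = a*b + b*c + c*a"
  \<comment> \<open>\<open>\<sigma>\<close> and \<open>\<pi>\<close> solve a homogeneous linear system with determinant \<open>E2 - s\<^sup>2 \<noteq> 0\<close>\<close>
  define \<sigma> where "\<sigma> = (d + e) - (d' + e')"
  define \<pi> where "\<pi> = d * e - d' * e'"
  have i1: "s * \<sigma> + \<pi> = 0"
  proof -
    have "s * \<sigma> + \<pi> = elem_sym2 a b c d e - elem_sym2 a b c d' e'"
      unfolding elem_sym2_split \<sigma>_def \<pi>_def s_def by (simp add: algebra_simps)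
    thus ?thesis
      using sym by simp
  qed
  have i2: "E2 * \<sigma> + s * \<pi> = 0"
  proof -
    have "E2 * \<sigma> + s * \<pi> = elem_sym3 a b c d e - elem_sym3 a b c d' e'"
      unfolding elem_sym3_split \<sigma>_def \<pi>_def s_def E2_def by (simp add: algebra_simps)
    thus ?thesis
      using sym by simp
  qed
  have "(E2 - s\<^sup>2) * \<sigma> = (E2 * \<sigma> + s * \<pi>) - s * (s * \<sigma> + \<pi>)"
    by (simp add: algebra_simps power2_eq_square)
  hence "(E2 - s\<^sup>2) * \<sigma> = 0"
    using i1 i2 by simp
  moreover have "E2 - s\<^sup>2 \<noteq> 0"
    using roots_unity_sym2_ne_sum_squared[OF U dist] unfolding E2_def s_def by simp
  ultimately have "\<sigma> = 0"
    by simp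
  hence sum: "d + e = d' + e'" and prod: "d * e = d' * e'"
    using i1 unfolding \<sigma>_def \<pi>_def by simp_all
  show ?thesis
  proof
    fix v assume v: "v \<in> {d', e'}"
    have "(v + d) * (v + e) = v\<^sup>2 + (d + e) * v + d * e"
      by (simp add: algebra_simps power2_eq_square)
    also have "\<dots> = v\<^sup>2 + (d' + e') * v + d' * e'"
      unfolding sum prod ..
    also have "\<dots> = 0"
      using v by (auto simp: algebra_simps power2_eq_square)
    finally show "v \<in> {d, e}"
      using add_eq_0_iff_eq by auto
  qed
qed

end

section \<open>Completing three points to a block\<close>

text \<open>
  In characteristic 2 this is the Moebius map \<open>t \<mapsto> d\<close> sending \<open>0, 1, \<infinity>\<close> to \<open>a, b, c\<close>;
  it maps \<open>GF(q)\<close> into \<open>U\<close>.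
\<close>
definition moebius_point :: "'a::field \<Rightarrow> 'a \<Rightarrow> 'a \<Rightarrow> 'a \<Rightarrow> 'a" where
  "moebius_point a b c t = (t * c * (a + b) + a * (b + c)) / (t * (a + b) + (b + c))"

context gf_q_squared
begin

lemma moebius_denominator_nonzero:
  assumes U: "a \<in> U" "b \<in> U" "c \<in> U" and "a \<noteq> b"
    and t: "t ^ q = t" "t\<^sup>2 + t \<noteq> 0"
  shows "t * (a + b) + (b + c) \<noteq> 0"
proof
  assume "t * (a + b) + (b + c) = 0"
  hence c: "c = t * (a + b) + b"
    by (simp add: add_eq_0_iff_eq add.assoc[symmetric])
  have nz: "a \<noteq> 0" "b \<noteq> 0"
    using U roots_unity_nonzero by auto
  have "1 = c * c ^ q"
    using U(3) by (simp add: roots_unity_def)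
  also have "\<dots> = (t * (a + b) + b) * (t * (inverse a + inverse b) + inverse b)"
    unfolding c using U t by (simp add: frobenius_add power_mult_distrib roots_unity_pow_q)
  finally have "a * b = (t * (a + b) + b) * (t * (inverse a + inverse b) + inverse b) * (a * b)"
    by simp
  also have "\<dots> = (t * (a + b) + b) * (t * (a + b) + a)"
    using nz by (simp add: field_simps)
  also have "\<dots> = (t\<^sup>2 + t) * (a + b)\<^sup>2 + a * b"
    by (simp add: algebra_simps power2_eq_square)
  finally have "(t\<^sup>2 + t) * (a + b)\<^sup>2 = 0"
    by simp
  thus False
    using t \<open>a \<noteq> b\<close> add_eq_0_iff_eq by simp
qed

lemma moebius_point_in_roots_unity:
  assumes U: "a \<in> U" "b \<in> U" "c \<in> U" and "a \<noteq> b"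
    and t: "t ^ q = t" "t\<^sup>2 + t \<noteq> 0"
  shows "moebius_point a b c t \<in> U"
proof -
  define D where "D = t * (a + b) + (b + c)"
  define N where "N = t * c * (a + b) + a * (b + c)"
  have nz: "a * b * c \<noteq> 0"
    using U roots_unity_nonzero by auto
  have D: "D \<noteq> 0"
    unfolding D_def using moebius_denominator_nonzero[OF assms] .
  have Nq: "N ^ q = D / (a * b * c)"
    unfolding N_def D_def using U t nz
    by (simp add: frobenius_add power_mult_distrib roots_unity_pow_q field_simps)
  have Dq: "D ^ q = N / (a * b * c)"
    unfolding N_def D_def using U t nz
    by (simp add: frobenius_add power_mult_distrib roots_unity_pow_q field_simps)
  have N: "N \<noteq> 0"
    using Nq D nz q_ge_16 by (auto simp: power_0_left)
  have "(N / D) ^ (q + 1) = (N / D) * (N ^ q / D ^ q)"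
    by (simp add: power_divide)
  also have "\<dots> = 1"
    unfolding Nq Dq using N D nz by (simp add: field_simps)
  finally show ?thesis
    unfolding moebius_point_def roots_unity_def N_def D_def by simp
qed

lemma moebius_point_ne:
  assumes U: "a \<in> U" "b \<in> U" "c \<in> U" and dist: "a \<noteq> b" "a \<noteq> c" "b \<noteq> c"
    and t: "t ^ q = t" "t\<^sup>2 + t \<noteq> 0"
  shows "moebius_point a b c t \<notin> {a, b, c}"
proof -
  define D where "D = t * (a + b) + (b + c)"
  define N where "N = t * c * (a + b) + a * (b + c)"
  have D: "D \<noteq> 0"
    unfolding D_def using moebius_denominator_nonzero[OF U dist(1) t] .
  have "t\<^sup>2 + t = t * (t + 1)"
    by (simp add: algebra_simps power2_eq_square)
  hence "t \<noteq> 0" "t + 1 \<noteq> 0"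
    using t(2) by auto
  moreover have "a + b \<noteq> 0" "b + c \<noteq> 0" "c + a \<noteq> 0"
    using dist by (auto simp: add_eq_0_iff_eq)
  moreover have "N + a * D = t * (a + b) * (c + a)" "N + b * D = (t + 1) * (a + b) * (b + c)"
    "N + c * D = (c + a) * (b + c)"
    unfolding N_def D_def by (simp_all add: algebra_simps)
  ultimately have nonzero: "N + v * D \<noteq> 0" if "v \<in> {a, b, c}" for v
    using that by auto
  have "N / D \<noteq> v" if "v \<in> {a, b, c}" for v
  proof
    assume "N / D = v"
    hence "N + v * D = 0"
      using D by (simp add: divide_eq_eq)
    with nonzero that show False
      by blast
  qed
  thus ?thesis
    unfolding moebius_point_def N_def D_def by blast
qed

lemma moebius_point_inj:
  fixes a b c t1 t2 :: 'a
  assumes dist: "a \<noteq> b" "a \<noteq> c" "b \<noteq> c" and "t1 \<noteq> t2"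
    and D: "t1 * (a + b) + (b + c) \<noteq> 0" "t2 * (a + b) + (b + c) \<noteq> 0"
  shows "moebius_point a b c t1 \<noteq> moebius_point a b c t2"
proof
  assume "moebius_point a b c t1 = moebius_point a b c t2"
  hence "(t1 * c * (a + b) + a * (b + c)) * (t2 * (a + b) + (b + c))
      + (t2 * c * (a + b) + a * (b + c)) * (t1 * (a + b) + (b + c)) = 0"
    using D by (simp add: moebius_point_def frac_eq_eq)
  moreover have "(t1 * c * (a + b) + a * (b + c)) * (t2 * (a + b) + (b + c))
      + (t2 * c * (a + b) + a * (b + c)) * (t1 * (a + b) + (b + c))
      = (t1 + t2) * (a + b) * (b + c) * (c + a)"
    by (simp add: algebra_simps)
  moreover have "a + b \<noteq> 0" "b + c \<noteq> 0" "c + a \<noteq> 0" "t1 + t2 \<noteq> 0"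
    using dist \<open>t1 \<noteq> t2\<close> by (auto simp: add_eq_0_iff_eq)
  ultimately show False
    by simp
qed


lemma moebius_conjugate_points_elem_sym_eq_0:
  fixes a b c t1 t2 :: 'a
  assumes t: "t1 * t2 = 1" "t1 + t2 = 1"
    and D: "t1 * (a + b) + (b + c) \<noteq> 0" "t2 * (a + b) + (b + c) \<noteq> 0"
  shows "elem_sym2 a b c (moebius_point a b c t1) (moebius_point a b c t2) = 0
    \<and> elem_sym3 a b c (moebius_point a b c t1) (moebius_point a b c t2) = 0"
proof -
  define A B C G where "A = a + b" and "B = b + c" and "C = c * (a + b)" and "G = a * (b + c)"
  define D1 D2 N1 N2 where "D1 = t1 * A + B" and "D2 = t2 * A + B"
    and "N1 = t1 * C + G" and "N2 = t2 * C + G"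
  have D12: "D1 * D2 = A\<^sup>2 + A * B + B\<^sup>2"
  proof -
    have "D1 * D2 = (t1 * t2) * A\<^sup>2 + (t1 + t2) * A * B + B\<^sup>2"
      unfolding D1_def D2_def by (simp add: algebra_simps power2_eq_square)
    thus ?thesis
      using t by simp
  qed
  have ND: "N1 * D2 + N2 * D1 = A * G + B * C"
  proof -
    have "N1 * D2 + N2 * D1 = (t1 + t2) * (A * G + B * C)"
      unfolding N1_def N2_def D1_def D2_def by (simp add: algebra_simps)
    thus ?thesis
      using t by simp
  qed
  have N12: "N1 * N2 = C\<^sup>2 + C * G + G\<^sup>2"
  proof -
    have "N1 * N2 = (t1 * t2) * C\<^sup>2 + (t1 + t2) * C * G + G\<^sup>2"
      unfolding N1_def N2_def by (simp add: algebra_simps power2_eq_square)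
    thus ?thesis
      using t by simp
  qed
  have "moebius_point a b c t1 = N1 / D1" "moebius_point a b c t2 = N2 / D2"
    unfolding moebius_point_def N1_def N2_def D1_def D2_def A_def B_def C_def G_def
    by (simp_all add: mult.assoc)
  moreover have "D1 \<noteq> 0" "D2 \<noteq> 0"
    using D unfolding D1_def D2_def A_def B_def .
  moreover have "(a*b + b*c + c*a) * (D1 * D2) + (a + b + c) * (N1 * D2 + N2 * D1) + N1 * N2 = 0"
    unfolding D12 ND N12 A_def B_def C_def G_def by (simp add: algebra_simps power2_eq_square)
  moreover have "a*b*c * (D1 * D2) + (a*b + b*c + c*a) * (N1 * D2 + N2 * D1) + (a + b + c) * (N1 * N2) = 0"
    unfolding D12 ND N12 A_def B_def C_def G_def by (simp add: algebra_simps power2_eq_square)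
  ultimately show ?thesis
    using elem_sym_divide_clear[of D1 D2 a b c N1 N2] by simp
qed

lemma exists_elem_sym_completion:
  assumes U: "a \<in> U" "b \<in> U" "c \<in> U" and dist: "a \<noteq> b" "a \<noteq> c" "b \<noteq> c"
  obtains d e where "d \<in> U" "e \<in> U" "distinct [a, b, c, d, e]"
    "elem_sym2 a b c d e = 0" "elem_sym3 a b c d e = 0"
proof -
  obtain w :: 'a where w: "w\<^sup>2 + w + 1 = 0" "w ^ q = w"
    using exists_cube_root_of_unity_in_subfield by blast
  define t1 t2 where "t1 = w" and "t2 = w + 1"
  have "w\<^sup>2 + w = 1"
    using w(1) by (simp add: add_eq_0_iff_eq)
  hence t: "t1 ^ q = t1" "t2 ^ q = t2" "t1\<^sup>2 + t1 \<noteq> 0" "t2\<^sup>2 + t2 \<noteq> 0"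
    "t1 * t2 = 1" "t1 + t2 = 1" "t1 \<noteq> t2"
    unfolding t1_def t2_def using w(2)
    by (simp_all add: frobenius_add power2_add algebra_simps power2_eq_square)
  define d e where "d = moebius_point a b c t1" and "e = moebius_point a b c t2"
  have D: "t1 * (a + b) + (b + c) \<noteq> 0" "t2 * (a + b) + (b + c) \<noteq> 0"
    using moebius_denominator_nonzero[OF U dist(1)] t by simp_all
  show ?thesis
  proof
    show "d \<in> U" "e \<in> U"
      unfolding d_def e_def using moebius_point_in_roots_unity[OF U dist(1)] t by simp_all
    have "d \<noteq> e"
      unfolding d_def e_def using moebius_point_inj[OF dist t(7) D] .
    thus "distinct [a, b, c, d, e]"
      unfolding d_def e_def using moebius_point_ne[OF U dist t(1,3)] moebius_point_ne[OF U dist t(2,4)] dist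
      by auto
    show "elem_sym2 a b c d e = 0" "elem_sym3 a b c d e = 0"
      unfolding d_def e_def using moebius_conjugate_points_elem_sym_eq_0[OF t(5,6) D] by simp_all
  qed
qed

lemma quintic_block_through_triple_subset:
  assumes U: "a \<in> U" "b \<in> U" "c \<in> U" and dist: "a \<noteq> b" "a \<noteq> c" "b \<noteq> c"
    and sym: "elem_sym2 a b c d e = 0" "elem_sym3 a b c d e = 0"
    and B: "B \<in> quintic_blocks q" "{a, b, c} \<subseteq> B"
  shows "B \<subseteq> {a, b, c, d, e}"
proof -
  obtain x y where roots: "B = quintic_roots q x y" and "card B = 5"
    using B(1) unfolding quintic_blocks_def by blast
  hence "card (B - {a, b, c}) = 2"
    using B(2) dist by (simp add: card_Diff_subset card.infinite)
  then obtain d' e' where de': "B - {a, b, c} = {d', e'}" "d' \<noteq> e'"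
    by (meson card_2_iff)
  hence "B = {a, b, c, d', e'}" "distinct [a, b, c, d', e']"
    using B(2) dist by auto
  hence "elem_sym2 a b c d' e' = 0" "elem_sym3 a b c d' e' = 0"
    using quintic_roots_elem_sym_eq_0 roots by metis+
  hence "{d', e'} \<subseteq> {d, e}"
    using elem_sym_eq_0_completion_unique[OF U dist sym] by blast
  thus ?thesis
    using \<open>B = {a, b, c, d', e'}\<close> by auto
qed

lemma quintic_blocks_steiner: "is_t_design 3 (q + 1) 5 1 U (quintic_blocks q)"
  unfolding is_t_design_def
proof (intro conjI allI impI ballI)
  show "finite U" "card U = q + 1"
    by (simp_all add: card_roots_unity)
  show "B \<subseteq> U" "card B = 5" if "B \<in> quintic_blocks q" for B
    using that quintic_roots_subset unfolding quintic_blocks_def by blast+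
  fix T assume T: "T \<subseteq> U \<and> card T = 3"
  then obtain a b c where abc: "T = {a, b, c}" "a \<noteq> b" "a \<noteq> c" "b \<noteq> c"
    by (metis card_3_iff)
  hence U: "a \<in> U" "b \<in> U" "c \<in> U"
    using T by auto
  obtain d e where de: "d \<in> U" "e \<in> U" "distinct [a, b, c, d, e]"
    and sym: "elem_sym2 a b c d e = 0" "elem_sym3 a b c d e = 0"
    using exists_elem_sym_completion[OF U abc(2-4)] by blast
  define Z where "Z = {a, b, c, d, e}"
  have "card Z = 5"
    unfolding Z_def using de(3) by simp
  moreover obtain x y where "quintic_roots q x y = Z"
    unfolding Z_def using quintic_roots_eq_if_elem_sym_eq_0[OF U de(1,2) sym] by blast
  ultimately have "Z \<in> quintic_blocks q"
    unfolding quintic_blocks_def by blast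
  moreover have "B = Z" if "B \<in> quintic_blocks q" "T \<subseteq> B" for B
  proof (rule card_subset_eq)
    show "finite Z" "B \<subseteq> Z"
      unfolding Z_def using quintic_block_through_triple_subset[OF U abc(2-4) sym] that abc(1)
      by simp_all
    show "card B = card Z"
      using that(1) \<open>card Z = 5\<close> unfolding quintic_blocks_def by auto
  qed
  ultimately have "{B \<in> quintic_blocks q. T \<subseteq> B} = {Z}"
    using abc(1) unfolding Z_def by blast
  thus "card {B \<in> quintic_blocks q. T \<subseteq> B} = 1"
    by simp
qed simp

end

theorem theorem25:
  fixes m :: nat and q :: nat
  assumes "even m" and "m \<ge> 4" and "q = 2 ^ m"
    and "card (UNIV :: ('a::{field,finite}) set) = q ^ 2"
  defines "U \<equiv> roots_unity q :: 'a set"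
  defines "Bs \<equiv> blocks_of_weight U (trace_code q (code_C35 q)) (q - 4)"
  shows "is_t_design 3 (q + 1) (q - 4) ((q - 4) * (q - 5) * (q - 6) div 60) U Bs
         \<and> is_t_design 3 (q + 1) 5 1 U (complement_blocks U Bs)"
proof -
  interpret gf_q_squared "TYPE('a)" m q
    by unfold_locales (use assms in auto)
  have steiner: "is_t_design 3 (q + 1) 5 1 U (complement_blocks U Bs)"
    unfolding U_def Bs_def complement_blocks_weight_q_minus_4 by (rule quintic_blocks_steiner)
  have "\<And>B. B \<in> Bs \<Longrightarrow> B \<subseteq> U"
    unfolding Bs_def blocks_of_weight_def supp_on_def by auto
  hence "complement_blocks U (complement_blocks U Bs) = Bs"
    by (rule complement_blocks_complement_blocks)
  moreover have "q + 1 - 5 = q - 4" "q + 1 - 6 = q - 5" "q + 1 - 7 = q - 6" "10 \<le> q + 1"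
    using q_ge_16 by simp_all
  ultimately have "is_t_design 3 (q + 1) (q - 4) ((q - 4) * (q - 5) * (q - 6) div 60) U Bs"
    using complement_steiner_3_5_design[OF steiner] by metis
  with steiner show ?thesis
    by blast
qed

end
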